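(* Let $\gamma=(\gamma_1,\dots,\gamma_b)$ be a parallel map on $V=V_1\oplus\cdots\oplus V_b$, $V_i\cong(\mathbb F_2)^m$, with $0\gamma=0$. Suppose every $\gamma_i$ is differentially $2^r$-uniform with $r<m-1$ and strongly $r$-anti-invariant. If $\gamma$ maps $\mathcal L(W)$ onto a non-trivial partition $\mathcal{LA}_U(W_1|W_2)$, then $W$, $W_1$, $W_2$ are walls and $W=W_1=W_2$; in particular $\mathcal{LA}_U(W_1|W_2)$ is linear.
   Context: Let $m,b>1$, $n=mb$, $V=(\mathbb F_2)^n=V_1\oplus\cdots\oplus V_b$, $V_i\cong(\mathbb F_2)^m$. Permutations act on the right. A parallel map is $\gamma\in\mathrm{Sym}(V)$ with $(v_1\oplus\cdots\oplus v_b)\gamma=v_1\gamma_1\oplus\cdots\oplus v_b\gamma_b$, $\gamma_i\in\mathrm{Sym}(V_i)$ (S-boxes). A wall is $\bigoplus_{i\in I}V_i$ with $\emptyset\ne I\subsetneq\{1,\dots,b\}$. For $f:(\mathbb F_2)^m\to(\mathbb F_2)^m$, $f$ is differentially $\delta$-uniform if $\delta=\max_{a\ne0,b}|\{x:f(x+a)+f(x)=b\}|$; with $f(0)=0$ and $1\le r<m$, $f$ is strongly $r$-anti-invariant if for all subspaces $U,W$ with $f(U)=W$, either $\dim U=\dim W<m-r$ or $U=W=(\mathbb F_2)^m$. A permutation maps a partition $\mathcal A$ onto $\mathcal B$ if it sends the blocks of $\mathcal A$ exactly onto the blocks of $\mathcal B$; a partition is trivial if it is the partition into singletons or $\{V\}$.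 $\mathcal L(W)=\{W+v:v\in V\}$ for a subspace $W$ (linear partition). For a subspace $U$ of dimension $n-1$ and subspaces $W_1,W_2\subseteq U$, $\mathcal{LA}_U(W_1|W_2)=\{W_1+v:v\in U\}\cup\{(W_2+\bar v)+v:v\in U\}$ for any $\bar v\in V\setminus U$. *)

theory Defs
  imports Main
begin

text \<open>Vectors of (F_2)^k are modelled as functions nat => bool (True = 1) that
vanish outside the coordinates 0..<k; addition is coordinatewise xor.\<close>

definition Vsp :: "nat \<Rightarrow> (nat \<Rightarrow> bool) set" where
  "Vsp k = {v. \<forall>i. k \<le> i \<longrightarrow> \<not> v i}"

definition vzero :: "nat \<Rightarrow> bool" where
  "vzero = (\<lambda>i. False)"

definition vadd :: "(nat \<Rightarrow> bool) \<Rightarrow> (nat \<Rightarrow> bool) \<Rightarrow> (nat \<Rightarrow> bool)" where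
  "vadd u v = (\<lambda>i. u i \<noteq> v i)"

text \<open>Linear subspaces of (F_2)^k (over F_2 these are exactly the subsets containing 0
closed under addition; scalar multiplication by 0 and 1 is then automatic).\<close>
definition subspace2 :: "nat \<Rightarrow> (nat \<Rightarrow> bool) set \<Rightarrow> bool" where
  "subspace2 k U \<longleftrightarrow> U \<subseteq> Vsp k \<and> vzero \<in> U \<and> (\<forall>u\<in>U. \<forall>v\<in>U. vadd u v \<in> U)"

definition dim2 :: "(nat \<Rightarrow> bool) set \<Rightarrow> nat" where
  "dim2 U = (THE d. card U = 2 ^ d)"

definition coset2 :: "(nat \<Rightarrow> bool) set \<Rightarrow> (nat \<Rightarrow> bool) \<Rightarrow> (nat \<Rightarrow> bool) set" where
  "coset2 W v = (\<lambda>w. vadd w v) ` W"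

definition blk :: "nat \<Rightarrow> nat \<Rightarrow> (nat \<Rightarrow> bool) \<Rightarrow> (nat \<Rightarrow> bool)" where
  "blk m i v = (\<lambda>j. if j < m then v (i * m + j) else False)"

definition parmap :: "nat \<Rightarrow> nat \<Rightarrow> (nat \<Rightarrow> (nat \<Rightarrow> bool) \<Rightarrow> (nat \<Rightarrow> bool))
                      \<Rightarrow> (nat \<Rightarrow> bool) \<Rightarrow> (nat \<Rightarrow> bool)" where
  "parmap m b g v = (\<lambda>k. if k < m * b then g (k div m) (blk m (k div m) v) (k mod m) else False)"

text \<open>Walls: \<Oplus>_{i\<in>I} V_i with I nonempty proper subset of the block indices.\<close>
definition wall :: "nat \<Rightarrow> nat \<Rightarrow> (nat \<Rightarrow> bool) set \<Rightarrow> bool" where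
  "wall m b X \<longleftrightarrow> (\<exists>I. I \<noteq> {} \<and> I \<subset> {0..<b} \<and>
      X = {v \<in> Vsp (m * b). \<forall>k < m * b. k div m \<notin> I \<longrightarrow> \<not> v k})"

definition diff_uniform :: "nat \<Rightarrow> ((nat \<Rightarrow> bool) \<Rightarrow> (nat \<Rightarrow> bool)) \<Rightarrow> nat \<Rightarrow> bool" where
  "diff_uniform m f \<delta> \<longleftrightarrow>
     \<delta> = Max {card {x \<in> Vsp m. vadd (f (vadd x a)) (f x) = c} | a c.
                a \<in> Vsp m \<and> a \<noteq> vzero \<and> c \<in> Vsp m}"

definition strongly_anti_invariant :: "nat \<Rightarrow> nat \<Rightarrow> ((nat \<Rightarrow> bool) \<Rightarrow> (nat \<Rightarrow> bool)) \<Rightarrow> bool" where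
  "strongly_anti_invariant m r f \<longleftrightarrow> f vzero = vzero \<and> 1 \<le> r \<and> r < m \<and>
     (\<forall>U W. subspace2 m U \<and> subspace2 m W \<and> f ` U = W \<longrightarrow>
        (dim2 U = dim2 W \<and> dim2 W < m - r) \<or> (U = Vsp m \<and> W = Vsp m))"

definition maps_partition :: "((nat \<Rightarrow> bool) \<Rightarrow> (nat \<Rightarrow> bool)) \<Rightarrow> (nat \<Rightarrow> bool) set set
                               \<Rightarrow> (nat \<Rightarrow> bool) set set \<Rightarrow> bool" where
  "maps_partition f A B \<longleftrightarrow> (\<lambda>X. f ` X) ` A = B"

definition trivial_partition :: "nat \<Rightarrow> (nat \<Rightarrow> bool) set set \<Rightarrow> bool" where
  "trivial_partition n P \<longleftrightarrow> P = (\<lambda>v. {v}) ` Vsp n \<or> P = {Vsp n}"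

definition linpart :: "nat \<Rightarrow> (nat \<Rightarrow> bool) set \<Rightarrow> (nat \<Rightarrow> bool) set set" where
  "linpart n W = {coset2 W v | v. v \<in> Vsp n}"

definition LA :: "(nat \<Rightarrow> bool) set \<Rightarrow> (nat \<Rightarrow> bool) set \<Rightarrow> (nat \<Rightarrow> bool) set
                 \<Rightarrow> (nat \<Rightarrow> bool) \<Rightarrow> (nat \<Rightarrow> bool) set set" where
  "LA U W1 W2 vbar = {coset2 W1 v | v. v \<in> U} \<union> {coset2 (coset2 W2 vbar) v | v. v \<in> U}"

end

theory Submission
  imports Defs
begin

text \<open>Write P for the parallel map. As P 0 = 0 lies in the hyperplane U, P maps W onto W1;
  more generally a coset W + v with P v \<in> U goes onto W1 + P v, so every derivative
  P(v + w) + P v with w \<in> W and P v \<in> U lies in W1. On a single brick V_i this says that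
  \<gamma>_i maps the slice W \<inter> V_i onto W1 \<inter> V_i, and that on the preimage of U \<inter> V_i,
  which is at least half of V_i, the derivatives of \<gamma>_i in the directions of the i-th
  components of W take their values in a single coset of W1 \<inter> V_i. Differential
  2^r-uniformity then leaves room only for the full slice, the alternative allowed by strong
  r-anti-invariance. Hence W is the sum of the bricks it meets, i.e. a wall (W = 0 would make
  the partition trivial, W = V would put vbar into W1 \<subseteq> U). A parallel map fixes every
  wall and sends its cosets to cosets, which gives W1 = W2 = W.\<close>

lemma vadd_comm: "vadd u v = vadd v u"
  by (auto simp: vadd_def fun_eq_iff)

lemma vadd_assoc: "vadd (vadd u v) w = vadd u (vadd v w)"
  by (auto simp: vadd_def fun_eq_iff)

lemma vadd_vzero [simp]: "vadd v vzero = v" "vadd vzero v = v"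
  by (auto simp: vadd_def vzero_def fun_eq_iff)

lemma vadd_cancel [simp]:
  "vadd (vadd u v) v = u" "vadd v (vadd v u) = u" "vadd (vadd v u) v = u" "vadd v (vadd u v) = u"
  by (auto simp: vadd_def fun_eq_iff)

lemma vadd_left_cancel [simp]: "vadd u v = vadd u w \<longleftrightarrow> v = w"
  by (auto simp: vadd_def fun_eq_iff)

lemma vadd_right_cancel [simp]: "vadd v u = vadd w u \<longleftrightarrow> v = w"
  by (auto simp: vadd_def fun_eq_iff)

lemma vadd_eq_vzero_iff [simp]: "vadd u v = vzero \<longleftrightarrow> u = v"
  by (auto simp: vadd_def vzero_def fun_eq_iff)

lemma Vsp_vadd: "u \<in> Vsp k \<Longrightarrow> v \<in> Vsp k \<Longrightarrow> vadd u v \<in> Vsp k"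
  by (auto simp: Vsp_def vadd_def)

lemma less_if_Vsp: "v \<in> Vsp k \<Longrightarrow> v i \<Longrightarrow> i < k"
  by (auto simp: Vsp_def not_le[symmetric])

lemma vzero_in_Vsp [simp]: "vzero \<in> Vsp k"
  by (auto simp: Vsp_def vzero_def)

lemma Vsp_eq_image_Pow: "Vsp k = (\<lambda>S i. i \<in> S) ` Pow {0..<k}"
proof
  show "Vsp k \<subseteq> (\<lambda>S i. i \<in> S) ` Pow {0..<k}"
  proof
    fix v assume "v \<in> Vsp k"
    then have "{i. v i} \<in> Pow {0..<k}" "v = (\<lambda>i. i \<in> {i. v i})"
      by (auto simp: Vsp_def) (meson not_le)
    then show "v \<in> (\<lambda>S i. i \<in> S) ` Pow {0..<k}" by blast
  qed
qed (auto simp: Vsp_def)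

lemma finite_Vsp [simp]: "finite (Vsp k)"
  unfolding Vsp_eq_image_Pow by simp

lemma card_Vsp: "card (Vsp k) = 2 ^ k"
proof -
  have "inj_on (\<lambda>S i. i \<in> S) (Pow {0..<k})"
    by (rule inj_onI) (auto simp: fun_eq_iff)
  then show ?thesis
    unfolding Vsp_eq_image_Pow by (simp add: card_image card_Pow)
qed

lemma subspace2_closed: "subspace2 k S \<Longrightarrow> u \<in> S \<Longrightarrow> v \<in> S \<Longrightarrow> vadd u v \<in> S"
  by (simp add: subspace2_def)

lemma finite_subspace2: "subspace2 k S \<Longrightarrow> finite S"
  unfolding subspace2_def using finite_subset finite_Vsp by blast

lemma subspace2_eq_Un_translate:
  assumes S: "subspace2 k S" and a: "a \<in> S" "a j"
  shows "S = {v \<in> S. \<not> v j} \<union> (\<lambda>v. vadd v a) ` {v \<in> S. \<not> v j}"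
proof
  show "S \<subseteq> {v \<in> S. \<not> v j} \<union> (\<lambda>v. vadd v a) ` {v \<in> S. \<not> v j}"
  proof
    fix v assume v: "v \<in> S"
    show "v \<in> {v \<in> S. \<not> v j} \<union> (\<lambda>v. vadd v a) ` {v \<in> S. \<not> v j}"
    proof (cases "v j")
      case True
      then have "vadd v a \<in> {v \<in> S. \<not> v j}"
        using subspace2_closed[OF S v a(1)] a(2) by (auto simp: vadd_def)
      moreover have "v = vadd (vadd v a) a"
        by simp
      ultimately show ?thesis
        by blast
    qed (use v in auto)
  qed
qed (use subspace2_closed[OF S] a in auto)

lemma subspace2_card_power_of_two: "subspace2 k S \<Longrightarrow> \<exists>d. card S = 2 ^ d"
proof (induction k arbitrary: S)
  case 0
  have "Vsp 0 = {vzero}"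
    by (auto simp: Vsp_def vzero_def fun_eq_iff)
  with 0 have "S = {vzero}"
    by (auto simp: subspace2_def)
  then show ?case by (intro exI[of _ 0]) simp
next
  case (Suc k)
  define S0 where "S0 = {v \<in> S. \<not> v k}"
  have "S0 \<subseteq> Vsp k"
  proof
    fix v assume "v \<in> S0"
    then have "v \<in> Vsp (Suc k)" "\<not> v k"
      using Suc.prems by (auto simp: S0_def subspace2_def)
    then show "v \<in> Vsp k"
      unfolding Vsp_def using Suc_leI le_neq_implies_less by blast
  qed
  then have "subspace2 k S0"
    using Suc.prems by (auto simp: S0_def subspace2_def vzero_def vadd_def)
  then obtain d where d: "card S0 = 2 ^ d" and fin: "finite S0"
    using Suc.IH finite_subspace2 by blast
  show ?case
  proof (cases "\<exists>a\<in>S. a k")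
    case False
    then have "S = S0" by (auto simp: S0_def)
    with d show ?thesis by blast
  next
    case True
    then obtain a where a: "a \<in> S" "a k" by blast
    have split: "S = S0 \<union> (\<lambda>v. vadd v a) ` S0"
      unfolding S0_def by (rule subspace2_eq_Un_translate[OF Suc.prems a])
    have "S0 \<inter> (\<lambda>v. vadd v a) ` S0 = {}"
      using a(2) by (auto simp: S0_def vadd_def)
    moreover have "card ((\<lambda>v. vadd v a) ` S0) = card S0"
      by (rule card_image) (auto intro: inj_onI)
    ultimately have "card S = 2 ^ Suc d"
      using fin d by (subst split) (simp add: card_Un_disjoint)
    then show ?thesis by blast
  qed
qed

lemma dim2_eqI: "card S = 2 ^ d \<Longrightarrow> dim2 S = d"
  unfolding dim2_def by (rule the_equality) auto

lemma card_subspace2: "subspace2 k S \<Longrightarrow> card S = 2 ^ dim2 S"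
  using subspace2_card_power_of_two dim2_eqI by metis

section \<open>Cosets and hyperplanes\<close>

lemma coset2_vzero [simp]: "coset2 S vzero = S"
  by (simp add: coset2_def)

lemma coset2_singleton [simp]: "coset2 {a} u = {vadd a u}"
  by (simp add: coset2_def)

lemma card_coset2: "card (coset2 S u) = card S"
  unfolding coset2_def by (rule card_image) (auto intro: inj_onI)

lemma coset2_eq_if_mem:
  assumes S: "subspace2 k S" and p: "p \<in> coset2 S u"
  shows "coset2 S p = coset2 S u"
proof -
  obtain s where s: "s \<in> S" "p = vadd s u"
    using p by (auto simp: coset2_def)
  have shift: "(\<lambda>w. vadd w s) ` S = S"
    using subspace2_closed[OF S] s(1) by (auto simp: image_iff) (metis vadd_cancel(1))
  have "coset2 S p = (\<lambda>w. vadd w u) ` ((\<lambda>w. vadd w s) ` S)"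
    by (simp add: coset2_def s(2) image_image vadd_assoc)
  then show ?thesis
    by (simp only: shift coset2_def)
qed

lemma subset_if_coset2_eq:
  assumes S: "subspace2 k S" and T: "subspace2 l T" and eq: "coset2 S a = coset2 T c"
  shows "S \<subseteq> T"
proof
  fix x assume "x \<in> S"
  then have "vadd x a \<in> coset2 T c" "vadd vzero a \<in> coset2 T c"
    using S eq unfolding coset2_def subspace2_def by (metis image_eqI)+
  then obtain y y0 where "y \<in> T" "vadd x a = vadd y c" "y0 \<in> T" "vadd vzero a = vadd y0 c"
    by (auto simp: coset2_def)
  moreover from this have "x = vadd y y0"
    by (auto simp: vadd_def vzero_def fun_eq_iff)
  ultimately show "x \<in> T"
    using subspace2_closed[OF T] by simp
qed

lemma subspace2_eq_if_coset2_eq: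
  "subspace2 k S \<Longrightarrow> subspace2 l T \<Longrightarrow> coset2 S a = coset2 T c \<Longrightarrow> S = T"
  by (metis subset_antisym subset_if_coset2_eq)

lemma hyperplane_vadd_mem:
  assumes U: "subspace2 n U" "dim2 U = n - 1" and x: "x \<in> Vsp n - U" and y: "y \<in> Vsp n - U"
  shows "vadd x y \<in> U"
proof (rule ccontr)
  assume xy: "vadd x y \<notin> U"
  have fin: "finite U" "finite (coset2 U x)"
    using finite_subspace2[OF U(1)] by (simp_all add: coset2_def)
  have "U \<inter> coset2 U x = {}"
    using x subspace2_closed[OF U(1)] by (auto simp: coset2_def) (metis vadd_cancel(4))
  moreover have "y \<notin> U \<union> coset2 U x"
    using x y xy by (auto simp: coset2_def vadd_comm)
  ultimately have "card (insert y (U \<union> coset2 U x)) = 2 ^ (n - 1) + 2 ^ (n - 1) + 1"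
    using fin card_subspace2[OF U(1)] U(2) by (simp add: card_Un_disjoint card_coset2)
  moreover have "insert y (U \<union> coset2 U x) \<subseteq> Vsp n"
    using U x y Vsp_vadd by (auto simp: subspace2_def coset2_def)
  ultimately have "2 ^ (n - 1) + 2 ^ (n - 1) + 1 \<le> card (Vsp n)"
    by (metis card_mono finite_Vsp)
  then show False
    by (cases n) (simp_all add: card_Vsp)
qed

lemma card_ge_half_if_vadd_mem:
  assumes H: "H \<subseteq> Vsp m" and closed: "\<And>x y. x \<in> Vsp m - H \<Longrightarrow> y \<in> Vsp m - H \<Longrightarrow> vadd x y \<in> H"
  shows "2 ^ m \<le> 2 * card H"
proof (cases "H = Vsp m")
  case True
  then show ?thesis by (simp add: card_Vsp)
next
  case False
  then obtain x0 where x0: "x0 \<in> Vsp m - H"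
    using H by blast
  have fin: "finite H"
    using finite_subset[OF H finite_Vsp] .
  have "vadd x0 ` (Vsp m - H) \<subseteq> H"
    using closed[OF x0] by auto
  moreover have "inj_on (vadd x0) (Vsp m - H)"
    by (rule inj_onI) simp
  ultimately have "card (Vsp m - H) \<le> card H"
    using card_inj_on_le fin by blast
  moreover have "card (Vsp m - H) = card (Vsp m) - card H" "card H \<le> card (Vsp m)"
    using card_Diff_subset[OF fin H] card_mono[OF finite_Vsp H] by simp_all
  ultimately show ?thesis
    unfolding card_Vsp by linarith
qed

section \<open>Bricks\<close>

definition embed :: "nat \<Rightarrow> nat \<Rightarrow> (nat \<Rightarrow> bool) \<Rightarrow> (nat \<Rightarrow> bool)" where
  "embed m i x = (\<lambda>k. if k div m = i then x (k mod m) else False)"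

definition slice :: "nat \<Rightarrow> nat \<Rightarrow> (nat \<Rightarrow> bool) set \<Rightarrow> (nat \<Rightarrow> bool) set" where
  "slice m i W = {x \<in> Vsp m. embed m i x \<in> W}"

definition block_sum :: "nat \<Rightarrow> nat \<Rightarrow> nat set \<Rightarrow> (nat \<Rightarrow> bool) set" where
  "block_sum m b I = {v \<in> Vsp (m * b). \<forall>k < m * b. k div m \<notin> I \<longrightarrow> \<not> v k}"

lemma wall_iff_block_sum: "wall m b X \<longleftrightarrow> (\<exists>I. I \<noteq> {} \<and> I \<subset> {0..<b} \<and> X = block_sum m b I)"
  by (simp add: wall_def block_sum_def)

lemma blk_Vsp [simp]: "blk m i v \<in> Vsp m"
  by (auto simp: blk_def Vsp_def)

lemma blk_vadd: "blk m i (vadd u v) = vadd (blk m i u) (blk m i v)"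
  by (auto simp: blk_def vadd_def fun_eq_iff)

lemma blk_vzero [simp]: "blk m i vzero = vzero"
  by (auto simp: blk_def vzero_def fun_eq_iff)

lemma blk_eq_vzero_iff:
  assumes "0 < m"
  shows "blk m j v = vzero \<longleftrightarrow> (\<forall>k. k div m = j \<longrightarrow> \<not> v k)"
proof
  assume "blk m j v = vzero"
  then have blk_l: "blk m j v l = vzero l" for l
    by simp
  have "\<not> v (j * m + l)" if "l < m" for l
    using that blk_l[of l] by (simp add: blk_def vzero_def)
  then show "\<forall>k. k div m = j \<longrightarrow> \<not> v k"
    using assms by (metis div_mult_mod_eq mod_less_divisor)
qed (auto simp: blk_def vzero_def fun_eq_iff)

lemma Vsp_eqI_blk:
  assumes "0 < m" "u \<in> Vsp (m * b)" "v \<in> Vsp (m * b)" "\<And>i. i < b \<Longrightarrow> blk m i u = blk m i v"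
  shows "u = v"
proof
  fix k
  show "u k = v k"
  proof (cases "k < m * b")
    case True
    then have "k div m < b"
      using assms(1) by (simp add: less_mult_imp_div_less mult.commute)
    then have "blk m (k div m) u (k mod m) = blk m (k div m) v (k mod m)"
      using assms(4) by simp
    then show ?thesis
      using assms(1) by (simp add: blk_def)
  next
    case False
    then show ?thesis
      using assms(2,3) by (auto simp: Vsp_def)
  qed
qed

lemma embed_Vsp:
  assumes "0 < m" "i < b"
  shows "embed m i x \<in> Vsp (m * b)"
proof -
  have "k div m \<noteq> i" if "m * b \<le> k" for k
    using that assms by (metis div_le_mono div_mult_self1_is_m mult.commute leD)
  then show ?thesis
    by (auto simp: Vsp_def embed_def)
qed

lemma blk_embed:
  assumes "0 < m" "x \<in> Vsp m"
  shows "blk m j (embed m i x) = (if j = i then x else vzero)"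
  using assms by (auto simp: blk_def embed_def vzero_def Vsp_def fun_eq_iff)

lemma embed_vadd: "embed m i (vadd x y) = vadd (embed m i x) (embed m i y)"
  by (auto simp: embed_def vadd_def fun_eq_iff)

lemma embed_vzero [simp]: "embed m i vzero = vzero"
  by (auto simp: embed_def vzero_def fun_eq_iff)

lemma subspace2_slice: "subspace2 k W \<Longrightarrow> subspace2 m (slice m i W)"
  by (auto simp: subspace2_def slice_def embed_vadd Vsp_vadd)

lemma mem_block_sum_iff:
  assumes m: "0 < m"
  shows "v \<in> block_sum m b I \<longleftrightarrow> v \<in> Vsp (m * b) \<and> (\<forall>j<b. j \<notin> I \<longrightarrow> blk m j v = vzero)"
proof (cases "v \<in> Vsp (m * b)")
  case True
  have "k div m < b" if "k < m * b" for k
    using that by (simp add: less_mult_imp_div_less mult.commute)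
  then have "(\<forall>k<m * b. k div m \<notin> I \<longrightarrow> \<not> v k) \<longleftrightarrow> (\<forall>j<b. j \<notin> I \<longrightarrow> (\<forall>k. k div m = j \<longrightarrow> \<not> v k))"
    using less_if_Vsp[OF True] by blast
  then show ?thesis
    using True by (simp add: block_sum_def blk_eq_vzero_iff[OF m])
qed (simp add: block_sum_def)

lemma block_sum_empty: "block_sum m b {} = {vzero}"
  by (auto simp: block_sum_def Vsp_def vzero_def fun_eq_iff) (meson not_le)

lemma block_sum_all: "0 < m \<Longrightarrow> block_sum m b {0..<b} = Vsp (m * b)"
  by (auto simp: block_sum_def div_less_iff_less_mult mult.commute)

lemma truncate_Suc_blocks:
  assumes "0 < m"
  shows "(\<lambda>k. if k < Suc t * m then v k else False)
       = vadd (\<lambda>k. if k < t * m then v k else False) (embed m t (blk m t v))"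
proof
  fix k
  have "k < Suc t * m \<longleftrightarrow> k div m \<le> t" "k < t * m \<longleftrightarrow> k div m < t"
    using assms by (simp_all add: div_less_iff_less_mult less_Suc_eq_le[symmetric])
  moreover have "k div m = t \<Longrightarrow> t * m + k mod m = k"
    by (metis div_mult_mod_eq)
  ultimately show "(if k < Suc t * m then v k else False)
       = vadd (\<lambda>k. if k < t * m then v k else False) (embed m t (blk m t v)) k"
    using assms by (auto simp: vadd_def embed_def blk_def)
qed

lemma mem_subspace2_if_blocks:
  assumes m: "0 < m" and W: "subspace2 k W" and v: "v \<in> Vsp (m * b)"
    and blocks: "\<And>i. i < b \<Longrightarrow> embed m i (blk m i v) \<in> W"
  shows "v \<in> W"
proof -
  have "(\<lambda>k. if k < t * m then v k else False) \<in> W" if "t \<le> b" for t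
    using that
  proof (induction t)
    case 0
    then show ?case
      using W by (simp add: subspace2_def vzero_def[symmetric])
  next
    case (Suc t)
    then show ?case
      unfolding truncate_Suc_blocks[OF m] using subspace2_closed[OF W] blocks by simp
  qed
  moreover have "(\<lambda>k. if k < b * m then v k else False) = v"
    using v by (auto simp: Vsp_def fun_eq_iff mult.commute)
  ultimately show ?thesis
    by force
qed

lemma subspace2_eq_block_sum:
  assumes m: "0 < m" and W: "subspace2 (m * b) W"
    and full: "\<And>i w x. i < b \<Longrightarrow> w \<in> W \<Longrightarrow> blk m i w \<noteq> vzero \<Longrightarrow> x \<in> Vsp m \<Longrightarrow> embed m i x \<in> W"
  shows "W = block_sum m b {i. i < b \<and> (\<exists>w\<in>W. blk m i w \<noteq> vzero)}"
proof
  show "W \<subseteq> block_sum m b {i. i < b \<and> (\<exists>w\<in>W. blk m i w \<noteq> vzero)}"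
    using W by (auto simp: mem_block_sum_iff[OF m] subspace2_def)
next
  show "block_sum m b {i. i < b \<and> (\<exists>w\<in>W. blk m i w \<noteq> vzero)} \<subseteq> W"
  proof
    fix v assume v: "v \<in> block_sum m b {i. i < b \<and> (\<exists>w\<in>W. blk m i w \<noteq> vzero)}"
    have blocks: "embed m i (blk m i v) \<in> W" if "i < b" for i
    proof (cases "\<exists>w\<in>W. blk m i w \<noteq> vzero")
      case True
      then show ?thesis
        using full that blk_Vsp by blast
    next
      case False
      then have "blk m i v = vzero"
        using v that by (simp add: mem_block_sum_iff[OF m])
      then show ?thesis
        using W by (simp add: subspace2_def)
    qed
    moreover have "v \<in> Vsp (m * b)"
      using v by (simp add: mem_block_sum_iff[OF m])
    ultimately show "v \<in> W"
      using mem_subspace2_if_blocks[OF m W] by blast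
  qed
qed

section \<open>A single S-box\<close>

definition dderiv :: "((nat \<Rightarrow> bool) \<Rightarrow> (nat \<Rightarrow> bool)) \<Rightarrow> (nat \<Rightarrow> bool) \<Rightarrow> (nat \<Rightarrow> bool) \<Rightarrow> (nat \<Rightarrow> bool)" where
  "dderiv f a x = vadd (f (vadd x a)) (f x)"

lemma card_le_mult_card_image:
  assumes "finite A" "\<And>c. c \<in> f ` A \<Longrightarrow> card {x \<in> A. f x = c} \<le> K"
  shows "card A \<le> K * card (f ` A)"
proof -
  have "card A = card (\<Union>c\<in>f ` A. {x \<in> A. f x = c})"
    by (rule arg_cong[where f = card]) blast
  also have "\<dots> \<le> (\<Sum>c\<in>f ` A. card {x \<in> A. f x = c})"
    using assms(1) by (intro card_UN_le) simp
  also have "\<dots> \<le> (\<Sum>c\<in>f ` A. K)"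
    using assms(2) by (intro sum_mono) auto
  finally show ?thesis
    by (simp add: mult.commute)
qed

lemma card_dderiv_fibre_le:
  assumes "diff_uniform m f \<delta>" "a \<in> Vsp m" "a \<noteq> vzero" "c \<in> Vsp m"
  shows "card {x \<in> Vsp m. dderiv f a x = c} \<le> \<delta>"
proof -
  let ?N = "\<lambda>a c. card {x \<in> Vsp m. vadd (f (vadd x a)) (f x) = c}"
  have "{?N a c | a c. a \<in> Vsp m \<and> a \<noteq> vzero \<and> c \<in> Vsp m} \<subseteq> case_prod ?N ` (Vsp m \<times> Vsp m)"
    by auto
  then have "finite {?N a c | a c. a \<in> Vsp m \<and> a \<noteq> vzero \<and> c \<in> Vsp m}"
    by (rule finite_subset) simp
  moreover have "?N a c \<in> {?N a c | a c. a \<in> Vsp m \<and> a \<noteq> vzero \<and> c \<in> Vsp m}"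
    using assms by blast
  ultimately show ?thesis
    using assms(1) by (simp add: diff_uniform_def dderiv_def)
qed

lemma card_le_diff_uniform:
  assumes du: "diff_uniform m f \<delta>" and a: "a \<in> Vsp m" "a \<noteq> vzero"
    and A: "A \<subseteq> Vsp m" and C: "dderiv f a ` A \<subseteq> C" "C \<subseteq> Vsp m"
  shows "card A \<le> \<delta> * card C"
proof -
  have "card A \<le> \<delta> * card (dderiv f a ` A)"
  proof (rule card_le_mult_card_image)
    show "finite A"
      using finite_subset[OF A finite_Vsp] .
    fix c assume "c \<in> dderiv f a ` A"
    then have "c \<in> Vsp m"
      using C by blast
    then have "card {x \<in> Vsp m. dderiv f a x = c} \<le> \<delta>"
      using card_dderiv_fibre_le[OF du a] by blast
    moreover have "{x \<in> A. dderiv f a x = c} \<subseteq> {x \<in> Vsp m. dderiv f a x = c}"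
      using A by blast
    ultimately show "card {x \<in> A. dderiv f a x = c} \<le> \<delta>"
      using card_mono[OF _ \<open>{x \<in> A. _} \<subseteq> _\<close>] by (simp add: order_trans)
  qed
  also have "\<dots> \<le> \<delta> * card C"
    using C finite_subset[OF C(2) finite_Vsp] by (simp add: card_mono)
  finally show ?thesis .
qed

lemma dderiv_vzero: "f vzero = vzero \<Longrightarrow> dderiv f c vzero = f c"
  by (simp add: dderiv_def)

lemma dderiv_image_subset_nonzero:
  assumes f: "bij_betw f (Vsp m) (Vsp m)" "f vzero = vzero" and Z: "subspace2 m Z"
    and A: "A \<subseteq> Vsp m" and c: "c \<in> Vsp m" "c \<noteq> vzero" "f c \<in> Z"
    and derivs: "\<And>x. x \<in> A \<Longrightarrow> vadd (dderiv f c x) (dderiv f c vzero) \<in> Z"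
  shows "dderiv f c ` A \<subseteq> Z - {vzero}"
proof
  fix y assume "y \<in> dderiv f c ` A"
  then obtain x where x: "x \<in> A" "y = dderiv f c x"
    by blast
  have "vadd y (f c) \<in> Z"
    using derivs[of x] x by (simp add: dderiv_vzero[of f, OF f(2)])
  then have "y \<in> Z"
    using subspace2_closed[OF Z _ c(3)] by (metis vadd_cancel(1))
  moreover have "y \<noteq> vzero"
  proof
    assume "y = vzero"
    then have "f (vadd x c) = f x"
      using x(2) by (simp add: dderiv_def)
    then have "vadd x c = x"
      using f(1) x(1) A c(1) Vsp_vadd by (metis bij_betw_def inj_onD subsetD)
    then show False
      using c(2) by (metis vadd_left_cancel vadd_vzero(1))
  qed
  ultimately show "y \<in> Z - {vzero}"
    by simp
qed

text \<open>If Y \<noteq> V_m, strong anti-invariance gives dim Z < m - r. Derivatives of f in non-zero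
  directions have fibres of size at most 2^r, and A covers at least half of V_m. If Y = 0, the
  derivative in direction a is constant on A; otherwise, for 0 \<noteq> c \<in> Y, the derivative in
  direction c maps A into Z - {0}. Either way A is too small.\<close>
lemma anti_invariant_slice_eq_Vsp:
  assumes f: "bij_betw f (Vsp m) (Vsp m)" and du: "diff_uniform m f (2 ^ r)"
    and sai: "strongly_anti_invariant m r f" and r: "r < m - 1"
    and Y: "subspace2 m Y" and Z: "subspace2 m Z" and YZ: "f ` Y = Z"
    and A: "A \<subseteq> Vsp m" "2 ^ m \<le> 2 * card A"
    and a: "a \<in> Vsp m" "a \<noteq> vzero"
    and derivs: "\<And>c x. c \<in> insert a Y \<Longrightarrow> x \<in> A \<Longrightarrow> vadd (dderiv f c x) (dderiv f c vzero) \<in> Z"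
  shows "Y = Vsp m"
proof (rule ccontr)
  assume "Y \<noteq> Vsp m"
  then have dimZ: "dim2 Z < m - r"
    using sai Y Z YZ unfolding strongly_anti_invariant_def by blast
  have f0: "f vzero = vzero"
    using sai by (simp add: strongly_anti_invariant_def)
  have fV: "f x \<in> Vsp m" if "x \<in> Vsp m" for x
    using f that bij_betwE by blast
  have ZV: "Z \<subseteq> Vsp m"
    using Z by (simp add: subspace2_def)
  show False
  proof (cases "Y \<subseteq> {vzero}")
    case True
    then have "Z \<subseteq> {vzero}"
      using YZ f0 by auto
    have "dderiv f a ` A \<subseteq> {f a}"
    proof
      fix y assume "y \<in> dderiv f a ` A"
      then obtain x where "x \<in> A" "y = dderiv f a x"
        by blast
      then have "vadd y (f a) \<in> Z"
        using derivs[of a x] by (simp add: dderiv_vzero[of f, OF f0])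
      with \<open>Z \<subseteq> {vzero}\<close> show "y \<in> {f a}"
        by auto
    qed
    then have "card A \<le> 2 ^ r * card {f a}"
      using card_le_diff_uniform[OF du a A(1)] fV[OF a(1)] by blast
    then have "(2::nat) ^ m \<le> 2 ^ Suc r"
      using A(2) by simp
    then have "m \<le> Suc r"
      by (rule power_le_imp_le_exp[rotated]) simp
    then show False
      using r by simp
  next
    case False
    then obtain c where c: "c \<in> Y" "c \<noteq> vzero"
      by blast
    have cV: "c \<in> Vsp m"
      using Y c(1) by (auto simp: subspace2_def)
    have fc: "f c \<in> Z"
      using YZ c(1) by blast
    have "dderiv f c ` A \<subseteq> Z - {vzero}"
      using dderiv_image_subset_nonzero[OF f f0 Z A(1) cV c(2) fc] derivs c(1) by blast
    then have "card A \<le> 2 ^ r * card (Z - {vzero})"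
      using card_le_diff_uniform[OF du _ c(2) A(1)] cV ZV by blast
    also have "\<dots> < 2 ^ r * 2 ^ dim2 Z"
      using Z card_subspace2[OF Z] finite_subspace2[OF Z] by (simp add: subspace2_def)
    finally have "(2::nat) ^ m < 2 ^ Suc (r + dim2 Z)"
      using A(2) by (simp add: power_add)
    then have "m < Suc (r + dim2 Z)"
      by (rule power_less_imp_less_exp[rotated]) simp
    then show False
      using dimZ by linarith
  qed
qed

section \<open>Parallel maps\<close>

lemma parmap_Vsp [simp]: "parmap m b g v \<in> Vsp (m * b)"
  by (auto simp: parmap_def Vsp_def)

locale parallel_map =
  fixes m b :: nat and g :: "nat \<Rightarrow> (nat \<Rightarrow> bool) \<Rightarrow> (nat \<Rightarrow> bool)"
  assumes m_pos: "0 < m"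
    and sbox_bij: "\<And>i. i < b \<Longrightarrow> bij_betw (g i) (Vsp m) (Vsp m)"
    and sbox_vzero: "\<And>i. i < b \<Longrightarrow> g i vzero = vzero"
begin

lemma sbox_Vsp: "i < b \<Longrightarrow> x \<in> Vsp m \<Longrightarrow> g i x \<in> Vsp m"
  using sbox_bij bij_betwE by blast

lemma blk_parmap:
  assumes i: "i < b"
  shows "blk m i (parmap m b g v) = g i (blk m i v)"
proof
  fix j
  show "blk m i (parmap m b g v) j = g i (blk m i v) j"
  proof (cases "j < m")
    case True
    have "i * m + j < (i + 1) * m"
      using True by simp
    also have "\<dots> \<le> b * m"
      using i by (intro mult_right_mono) auto
    finally show ?thesis
      using True by (simp add: blk_def parmap_def mult.commute)
  next
    case False
    moreover have "g i (blk m i v) \<in> Vsp m"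
      using sbox_Vsp[OF i] by simp
    ultimately show ?thesis
      by (simp add: blk_def Vsp_def)
  qed
qed

lemma parmap_vzero [simp]: "parmap m b g vzero = vzero"
  by (rule Vsp_eqI_blk[OF m_pos, of _ b]) (simp_all add: blk_parmap sbox_vzero)

lemma parmap_embed:
  assumes "i < b" "x \<in> Vsp m"
  shows "parmap m b g (embed m i x) = embed m i (g i x)"
  by (rule Vsp_eqI_blk[OF m_pos, of _ b])
    (use assms in \<open>simp_all add: embed_Vsp[OF m_pos] blk_parmap blk_embed[OF m_pos] sbox_Vsp sbox_vzero\<close>)

lemma inj_on_parmap: "inj_on (parmap m b g) (Vsp (m * b))"
proof (rule inj_onI)
  fix u v assume uv: "u \<in> Vsp (m * b)" "v \<in> Vsp (m * b)" "parmap m b g u = parmap m b g v"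
  show "u = v"
  proof (rule Vsp_eqI_blk[OF m_pos uv(1,2)])
    fix i assume i: "i < b"
    then have "g i (blk m i u) = g i (blk m i v)"
      using uv(3) by (metis blk_parmap)
    then show "blk m i u = blk m i v"
      using sbox_bij[OF i] by (auto simp: bij_betw_def dest: inj_onD)
  qed
qed

text \<open>Outside brick i both derivatives have component g j (blk m j w), so they cancel.\<close>
lemma dderiv_parmap_embed:
  assumes i: "i < b" and x: "x \<in> Vsp m" "x' \<in> Vsp m"
  shows "vadd (dderiv (parmap m b g) w (embed m i x)) (dderiv (parmap m b g) w (embed m i x'))
       = embed m i (vadd (dderiv (g i) (blk m i w) x) (dderiv (g i) (blk m i w) x'))"
proof (rule Vsp_eqI_blk[OF m_pos, of _ b])
  show "vadd (dderiv (parmap m b g) w (embed m i x)) (dderiv (parmap m b g) w (embed m i x')) \<in> Vsp (m * b)"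
    by (simp add: dderiv_def Vsp_vadd)
  show "embed m i (vadd (dderiv (g i) (blk m i w) x) (dderiv (g i) (blk m i w) x')) \<in> Vsp (m * b)"
    using embed_Vsp[OF m_pos i] .
  fix j assume j: "j < b"
  have "vadd (dderiv (g i) (blk m i w) x) (dderiv (g i) (blk m i w) x') \<in> Vsp m"
    using i x by (simp add: dderiv_def Vsp_vadd sbox_Vsp)
  then show "blk m j (vadd (dderiv (parmap m b g) w (embed m i x)) (dderiv (parmap m b g) w (embed m i x')))
      = blk m j (embed m i (vadd (dderiv (g i) (blk m i w) x) (dderiv (g i) (blk m i w) x')))"
    using j x by (auto simp: dderiv_def blk_vadd blk_parmap blk_embed[OF m_pos])
qed

lemma parmap_coset2_block_sum:
  assumes v: "v \<in> Vsp (m * b)"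
  shows "parmap m b g ` coset2 (block_sum m b I) v = coset2 (block_sum m b I) (parmap m b g v)"
proof (rule card_subset_eq)
  have B: "block_sum m b I \<subseteq> Vsp (m * b)"
    by (auto simp: block_sum_def)
  then show "finite (coset2 (block_sum m b I) (parmap m b g v))"
    unfolding coset2_def using finite_subset[OF B finite_Vsp] by blast
  show "parmap m b g ` coset2 (block_sum m b I) v \<subseteq> coset2 (block_sum m b I) (parmap m b g v)"
  proof
    fix y assume "y \<in> parmap m b g ` coset2 (block_sum m b I) v"
    then obtain w where w: "w \<in> block_sum m b I" "y = parmap m b g (vadd w v)"
      by (auto simp: coset2_def)
    then have "vadd y (parmap m b g v) \<in> block_sum m b I"
      by (simp add: mem_block_sum_iff[OF m_pos] blk_vadd blk_parmap Vsp_vadd)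
    then show "y \<in> coset2 (block_sum m b I) (parmap m b g v)"
      unfolding coset2_def by (metis image_eqI vadd_cancel(1))
  qed
  have "coset2 (block_sum m b I) v \<subseteq> Vsp (m * b)"
    using B v by (auto simp: coset2_def Vsp_vadd)
  then show "card (parmap m b g ` coset2 (block_sum m b I) v) = card (coset2 (block_sum m b I) (parmap m b g v))"
    using card_image[OF inj_on_subset[OF inj_on_parmap]] by (simp add: card_coset2)
qed

lemma sbox_image_slice:
  assumes W: "W \<subseteq> Vsp (m * b)" and i: "i < b"
  shows "g i ` slice m i W = slice m i (parmap m b g ` W)"
proof
  show "g i ` slice m i W \<subseteq> slice m i (parmap m b g ` W)"
    using i by (auto simp: slice_def sbox_Vsp parmap_embed[symmetric])
next
  show "slice m i (parmap m b g ` W) \<subseteq> g i ` slice m i W"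
  proof
    fix y assume "y \<in> slice m i (parmap m b g ` W)"
    then obtain z where y: "y \<in> Vsp m" and z: "z \<in> W" "embed m i y = parmap m b g z"
      by (auto simp: slice_def)
    obtain x where x: "x \<in> Vsp m" "y = g i x"
      using sbox_bij[OF i] y by (metis bij_betw_imp_surj_on imageE)
    then have "parmap m b g (embed m i x) = parmap m b g z"
      using z(2) parmap_embed[OF i] by simp
    then have "embed m i x = z"
      using inj_on_parmap embed_Vsp[OF m_pos i] W z(1) by (auto dest: inj_onD)
    then show "y \<in> g i ` slice m i W"
      using x z(1) by (auto simp: slice_def)
  qed
qed

end

section \<open>Parallel maps sending a linear partition onto LA_U(W1|W2)\<close>

lemma LA_vzero_eq_singletons:
  assumes U: "subspace2 n U" "dim2 U = n - 1" and vbar: "vbar \<in> Vsp n - U"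
  shows "LA U {vzero} {vzero} vbar = (\<lambda>v. {v}) ` Vsp n"
proof
  show "LA U {vzero} {vzero} vbar \<subseteq> (\<lambda>v. {v}) ` Vsp n"
    using U(1) vbar Vsp_vadd by (auto simp: LA_def subspace2_def)
next
  show "(\<lambda>v. {v}) ` Vsp n \<subseteq> LA U {vzero} {vzero} vbar"
  proof
    fix B assume "B \<in> (\<lambda>v. {v}) ` Vsp n"
    then obtain y where y: "y \<in> Vsp n" "B = {y}"
      by blast
    show "B \<in> LA U {vzero} {vzero} vbar"
    proof (cases "y \<in> U")
      case True
      then show ?thesis
        using y(2) by (auto simp: LA_def)
    next
      case False
      then have "vadd y vbar \<in> U"
        using hyperplane_vadd_mem[OF U] y(1) vbar by blast
      moreover have "B = {vadd vbar (vadd y vbar)}"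
        using y(2) by simp
      ultimately show ?thesis
        by (auto simp: LA_def)
    qed
  qed
qed

locale parallel_map_onto_LA = parallel_map +
  fixes W U W1 W2 :: "(nat \<Rightarrow> bool) set" and vbar :: "nat \<Rightarrow> bool"
  assumes W: "subspace2 (m * b) W"
    and U: "subspace2 (m * b) U" and U_dim: "dim2 U = m * b - 1"
    and W1: "subspace2 (m * b) W1" "W1 \<subseteq> U"
    and W2: "subspace2 (m * b) W2" "W2 \<subseteq> U"
    and vbar: "vbar \<in> Vsp (m * b) - U"
    and maps: "maps_partition (parmap m b g) (linpart (m * b) W) (LA U W1 W2 vbar)"
begin

lemma mem_LA_iff: "B \<in> LA U W1 W2 vbar \<longleftrightarrow> (\<exists>v\<in>Vsp (m * b). B = parmap m b g ` coset2 W v)"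
  using maps unfolding maps_partition_def linpart_def by blast

lemma LA_block_eq_coset2:
  assumes B: "B \<in> LA U W1 W2 vbar" and p: "p \<in> B" "p \<in> U"
  shows "B = coset2 W1 p"
proof -
  from B consider (inside) u where "B = coset2 W1 u"
    | (outside) u where "u \<in> U" "B = coset2 (coset2 W2 vbar) u"
    unfolding LA_def by blast
  then show ?thesis
  proof cases
    case inside
    then show ?thesis
      using p(1) coset2_eq_if_mem[OF W1(1)] by metis
  next
    case outside
    then obtain w where w: "w \<in> W2" "p = vadd (vadd w vbar) u"
      using p(1) by (auto simp: coset2_def)
    then have "vbar = vadd (vadd p u) w"
      by (auto simp: vadd_def fun_eq_iff)
    moreover have "vadd (vadd p u) w \<in> U"
      using subspace2_closed[OF U] p(2) outside(1) w(1) W2(2) by blast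
    ultimately show ?thesis
      using vbar by blast
  qed
qed

lemma parmap_coset2_W:
  assumes v: "v \<in> Vsp (m * b)" and Pv: "parmap m b g v \<in> U"
  shows "parmap m b g ` coset2 W v = coset2 W1 (parmap m b g v)"
proof (rule LA_block_eq_coset2[OF _ _ Pv])
  show "parmap m b g ` coset2 W v \<in> LA U W1 W2 vbar"
    using v mem_LA_iff by blast
  have "v \<in> coset2 W v"
    using W by (force simp: coset2_def subspace2_def)
  then show "parmap m b g v \<in> parmap m b g ` coset2 W v"
    by blast
qed

lemma parmap_W: "parmap m b g ` W = W1"
  using parmap_coset2_W[of vzero] U by (simp add: subspace2_def)

lemma dderiv_parmap_mem_W1:
  assumes v: "v \<in> Vsp (m * b)" "parmap m b g v \<in> U" and w: "w \<in> W"
  shows "dderiv (parmap m b g) w v \<in> W1"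
proof -
  have "parmap m b g (vadd v w) \<in> coset2 W1 (parmap m b g v)"
    using parmap_coset2_W[OF v, symmetric] w by (auto simp: coset2_def vadd_comm)
  then show ?thesis
    by (auto simp: dderiv_def coset2_def)
qed

lemma slice_dderiv_mem:
  assumes i: "i < b" and w: "w \<in> W" and x: "x \<in> Vsp m" "embed m i (g i x) \<in> U"
  shows "vadd (dderiv (g i) (blk m i w) x) (dderiv (g i) (blk m i w) vzero) \<in> slice m i W1"
proof -
  have "dderiv (parmap m b g) w (embed m i x) \<in> W1"
    using dderiv_parmap_mem_W1 embed_Vsp[OF m_pos i] x(2) w by (simp add: parmap_embed[OF i x(1)])
  moreover have "dderiv (parmap m b g) w (embed m i vzero) \<in> W1"
    using dderiv_parmap_mem_W1 U w by (simp add: subspace2_def)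
  ultimately have "embed m i (vadd (dderiv (g i) (blk m i w) x) (dderiv (g i) (blk m i w) vzero)) \<in> W1"
    using subspace2_closed[OF W1(1)] dderiv_parmap_embed[OF i x(1) vzero_in_Vsp] by metis
  moreover have "vadd (dderiv (g i) (blk m i w) x) (dderiv (g i) (blk m i w) vzero) \<in> Vsp m"
    using i x(1) by (simp add: dderiv_def Vsp_vadd sbox_Vsp)
  ultimately show ?thesis
    by (simp add: slice_def)
qed

lemma card_sbox_preimage_slice_U:
  assumes i: "i < b"
  shows "2 ^ m \<le> 2 * card {x \<in> Vsp m. embed m i (g i x) \<in> U}"
proof -
  have "2 ^ m \<le> 2 * card (slice m i U)"
  proof (rule card_ge_half_if_vadd_mem)
    show "slice m i U \<subseteq> Vsp m"
      by (auto simp: slice_def)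
    fix x y assume "x \<in> Vsp m - slice m i U" "y \<in> Vsp m - slice m i U"
    then show "vadd x y \<in> slice m i U"
      using hyperplane_vadd_mem[OF U U_dim] embed_Vsp[OF m_pos i]
      by (auto simp: slice_def embed_vadd Vsp_vadd)
  qed
  moreover have "bij_betw (g i) {x \<in> Vsp m. embed m i (g i x) \<in> U} (slice m i U)"
    using sbox_bij[OF i] unfolding slice_def bij_betw_def by (auto intro: inj_on_subset)
  ultimately show ?thesis
    by (simp add: bij_betw_same_card)
qed

lemma slice_eq_Vsp:
  assumes du: "diff_uniform m (g i) (2 ^ r)" and sai: "strongly_anti_invariant m r (g i)"
    and r: "r < m - 1" and i: "i < b" and w: "w \<in> W" "blk m i w \<noteq> vzero"
  shows "slice m i W = Vsp m"
proof (rule anti_invariant_slice_eq_Vsp[OF sbox_bij[OF i] du sai r])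
  show "subspace2 m (slice m i W)" "subspace2 m (slice m i W1)"
    using W W1(1) by (simp_all add: subspace2_slice)
  show "g i ` slice m i W = slice m i W1"
    using W i by (simp add: sbox_image_slice subspace2_def parmap_W)
  show "{x \<in> Vsp m. embed m i (g i x) \<in> U} \<subseteq> Vsp m"
    by blast
  show "2 ^ m \<le> 2 * card {x \<in> Vsp m. embed m i (g i x) \<in> U}"
    using card_sbox_preimage_slice_U[OF i] .
  show "blk m i w \<in> Vsp m" "blk m i w \<noteq> vzero"
    using w(2) by simp_all
  fix c x assume c: "c \<in> insert (blk m i w) (slice m i W)" and x: "x \<in> {x \<in> Vsp m. embed m i (g i x) \<in> U}"
  then obtain w' where "w' \<in> W" "c = blk m i w'"
    using w(1) blk_embed[OF m_pos] by (auto simp: slice_def)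
  then show "vadd (dderiv (g i) c x) (dderiv (g i) c vzero) \<in> slice m i W1"
    using slice_dderiv_mem[OF i] x by blast
qed

lemma W1_eq_W: "W = block_sum m b I \<Longrightarrow> W1 = W"
  using parmap_W parmap_coset2_block_sum[of vzero I] by simp

lemma W2_eq_W:
  assumes WI: "W = block_sum m b I"
  shows "W2 = W"
proof -
  have "coset2 (coset2 W2 vbar) vzero \<in> LA U W1 W2 vbar"
    using U unfolding LA_def subspace2_def by blast
  then obtain v where v: "v \<in> Vsp (m * b)" "coset2 W2 vbar = parmap m b g ` coset2 W v"
    using mem_LA_iff by auto
  then have "coset2 W2 vbar = coset2 W (parmap m b g v)"
    using parmap_coset2_block_sum WI by simp
  then show ?thesis
    using subspace2_eq_if_coset2_eq W2(1) W by blast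
qed

lemma wall_if_block_sum:
  assumes WI: "W = block_sum m b I" "I \<subseteq> {0..<b}"
    and nontriv: "\<not> trivial_partition (m * b) (LA U W1 W2 vbar)"
  shows "wall m b W"
proof -
  have "I \<noteq> {}"
  proof
    assume "I = {}"
    then have "LA U W1 W2 vbar = (\<lambda>v. {v}) ` Vsp (m * b)"
      using WI W1_eq_W[OF WI(1)] W2_eq_W[OF WI(1)] LA_vzero_eq_singletons[OF U U_dim vbar]
      by (simp add: block_sum_empty)
    with nontriv show False
      by (simp add: trivial_partition_def)
  qed
  moreover have "I \<noteq> {0..<b}"
  proof
    assume "I = {0..<b}"
    then have "vbar \<in> W1"
      using WI W1_eq_W[OF WI(1)] vbar by (simp add: block_sum_all[OF m_pos])
    with W1(2) vbar show False
      by blast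
  qed
  ultimately show ?thesis
    unfolding wall_iff_block_sum using WI by blast
qed

end

theorem lemma3p8:
  fixes m b r :: nat
    and g :: "nat \<Rightarrow> (nat \<Rightarrow> bool) \<Rightarrow> (nat \<Rightarrow> bool)"
    and W U W1 W2 :: "(nat \<Rightarrow> bool) set"
    and vbar :: "nat \<Rightarrow> bool"
  assumes "1 < m" and "1 < b"
    and perm: "\<forall>i < b. bij_betw (g i) (Vsp m) (Vsp m)"
    and zero: "parmap m b g vzero = vzero"
    and r: "r < m - 1"
    and du: "\<forall>i < b. diff_uniform m (g i) (2 ^ r)"
    and sai: "\<forall>i < b. strongly_anti_invariant m r (g i)"
    and W: "subspace2 (m * b) W"
    and U: "subspace2 (m * b) U" "dim2 U = m * b - 1"
    and W12: "subspace2 (m * b) W1" "subspace2 (m * b) W2" "W1 \<subseteq> U" "W2 \<subseteq> U"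
    and vbar: "vbar \<in> Vsp (m * b) - U"
    and nontriv: "\<not> trivial_partition (m * b) (LA U W1 W2 vbar)"
    and maps: "maps_partition (parmap m b g) (linpart (m * b) W) (LA U W1 W2 vbar)"
  shows "wall m b W \<and> wall m b W1 \<and> wall m b W2 \<and> W = W1 \<and> W1 = W2"
proof -
  interpret parallel_map_onto_LA m b g W U W1 W2 vbar
    using assms by unfold_locales (auto simp: strongly_anti_invariant_def)
  define I where "I = {i. i < b \<and> (\<exists>w\<in>W. blk m i w \<noteq> vzero)}"
  have "W = block_sum m b I"
    unfolding I_def
  proof (rule subspace2_eq_block_sum[OF m_pos W])
    fix i w x assume "i < b" "w \<in> W" "blk m i w \<noteq> vzero" "x \<in> Vsp m"
    then have "x \<in> slice m i W"
      using slice_eq_Vsp du sai r by blast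
    then show "embed m i x \<in> W"
      by (simp add: slice_def)
  qed
  moreover have "I \<subseteq> {0..<b}"
    by (auto simp: I_def)
  ultimately show ?thesis
    using wall_if_block_sum nontriv W1_eq_W W2_eq_W by metis
qed

end
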